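(* Fix $\Delta>0$. Let $G_1,\dots,G_n$ be independent uniformly random great circles on $S^2$. For each pair $i\ne j$, let $z_{ij}$ be one of the two intersection points of $G_i$ and $G_j$ (chosen uniformly at random) and ${\cal C}_{ij}$ the disk on $S^2$ centered at $z_{ij}$ of radius $(2+\Delta)\sqrt{\pi/n}$. Then with probability tending to $1$ as $n\to\infty$, the configuration is typical, i.e. the number of great circles $G_k$ passing through each ${\cal C}_{ij}$ is $\Theta(\sqrt n)$ simultaneously for all pairs $i\neq j$ (that is, lies between $c\sqrt n$ and $C\sqrt n$ for constants $0<c\le C$ independent of $n$).
   Context: $S^2$ is the sphere in $\mathbb R^3$ of unit surface area. For $x\in S^2$, the great circle $G(x)$ is the intersection of $S^2$ with the plane through the center perpendicular to the diameter through $x$; a uniformly random great circle is $G(x)$ with $x$ uniformly distributed on $S^2$. A great circle "passes through" a disk if it intersects it. *)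

theory Defs
  imports "HOL-Probability.Probability"
begin

text \<open>Sphere of unit surface area: radius r with 4 pi r^2 = 1.\<close>
definition sph_r :: real where
  "sph_r = 1 / (2 * sqrt pi)"

definition S2 :: "(real^3) set" where
  "S2 = sphere 0 sph_r"

definition great_circle :: "real^3 \<Rightarrow> (real^3) set" where
  "great_circle x = {y \<in> S2. x \<bullet> y = 0}"

definition sdist :: "real^3 \<Rightarrow> real^3 \<Rightarrow> real" where
  "sdist y z = sph_r * arccos ((y \<bullet> z) / sph_r\<^sup>2)"

definition sdisk :: "real^3 \<Rightarrow> real \<Rightarrow> (real^3) set" where
  "sdisk z \<rho> = {y \<in> S2. sdist z y \<le> \<rho>}"

definition passes_through :: "real^3 \<Rightarrow> (real^3) set \<Rightarrow> bool" where
  "passes_through x D \<longleftrightarrow> great_circle x \<inter> D \<noteq> {}"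

text \<open>Uniform (normalised surface) measure on S2: radial projection of the
  uniform distribution on the unit ball.\<close>
definition unif_S2 :: "(real^3) measure" where
  "unif_S2 = distr (uniform_measure lborel (ball 0 1)) borel (\<lambda>v. (sph_r / norm v) *\<^sub>R v)"

definition coin :: "bool measure" where
  "coin = measure_pmf (pmf_of_set UNIV)"

text \<open>The two intersection points of G(x) and G(y) are +- r (x cross y)/|x cross y|;
  the boolean selects one of them.\<close>
definition isect_pt :: "real^3 \<Rightarrow> real^3 \<Rightarrow> bool \<Rightarrow> real^3" where
  "isect_pt x y b = (if b then 1 else -1) *\<^sub>R ((sph_r / norm (cross3 x y)) *\<^sub>R cross3 x y)"

definition pairs :: "nat \<Rightarrow> (nat \<times> nat) set" where
  "pairs n = {p. fst p < snd p \<and> snd p < n}"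

text \<open>Probability space for n circles: n independent uniform points x_k (G_k = G(x_k))
  and independent fair coins, one per pair i<j, choosing z_ij.\<close>
definition config_space :: "nat \<Rightarrow> ((nat \<Rightarrow> real^3) \<times> (nat \<times> nat \<Rightarrow> bool)) measure" where
  "config_space n = (PiM {..<n} (\<lambda>_. unif_S2)) \<Otimes>\<^sub>M (PiM (pairs n) (\<lambda>_. coin))"

definition zpt :: "(nat \<Rightarrow> real^3) \<times> (nat \<times> nat \<Rightarrow> bool) \<Rightarrow> nat \<Rightarrow> nat \<Rightarrow> real^3" where
  "zpt \<omega> i j = isect_pt (fst \<omega> (min i j)) (fst \<omega> (max i j)) (snd \<omega> (min i j, max i j))"

definition num_through :: "real \<Rightarrow> nat \<Rightarrow> (nat \<Rightarrow> real^3) \<times> (nat \<times> nat \<Rightarrow> bool) \<Rightarrow> nat \<Rightarrow> nat \<Rightarrow> nat" where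
  "num_through \<Delta> n \<omega> i j =
     card {k \<in> {..<n}. passes_through (fst \<omega> k) (sdisk (zpt \<omega> i j) ((2 + \<Delta>) * sqrt (pi / real n)))}"

end

(*
  A great circle G(x) meets the disk of angular radius theta around a point z iff
  |<x, z>| <= sin theta |x| |z|. Hence G_k passes through C_ij iff x_k lies in the band
  |<x, c>| <= sin theta |x| |c| around the plane orthogonal to c = x_i cross x_j, an event
  that ignores the coin choosing z_ij. For uniform x_k it has probability p between theta/512 and
  2 theta, where theta = 2 pi (2 + Delta) / sqrt n is the angular radius of C_ij.
  Conditioned on x_i and x_j, the number of circles through C_ij is 2 plus a binomial
  (n - 2, p) variable, whose mean is of order sqrt n; Chernoff bounds make a deviation by a
  constant factor exponentially unlikely in sqrt n, and a union bound over the n^2 pairs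
  finishes the proof.
*)

theory Submission
  imports Defs "HOL-Real_Asymp.Real_Asymp"
begin

section \<open>Great circles through small disks\<close>

lemma sph_r_pos: "sph_r > 0"
  by (simp add: sph_r_def)

lemma sdist_le_iff:
  assumes "norm y = sph_r" "norm z = sph_r" "0 \<le> \<theta>" "\<theta> \<le> pi"
  shows "sdist z y \<le> sph_r * \<theta> \<longleftrightarrow> cos \<theta> * sph_r\<^sup>2 \<le> z \<bullet> y"
proof -
  define c where "c = (z \<bullet> y) / sph_r\<^sup>2"
  have "\<bar>z \<bullet> y\<bar> \<le> sph_r\<^sup>2"
    using Cauchy_Schwarz_ineq2[of z y] assms by (simp add: power2_eq_square)
  then have c: "-1 \<le> c" "c \<le> 1"
    using sph_r_pos by (auto simp: c_def abs_le_iff field_simps)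
  have "sdist z y \<le> sph_r * \<theta> \<longleftrightarrow> arccos c \<le> \<theta>"
    using sph_r_pos by (simp add: sdist_def c_def)
  also have "\<dots> \<longleftrightarrow> cos \<theta> \<le> c"
  proof
    assume "arccos c \<le> \<theta>"
    then have "cos \<theta> \<le> cos (arccos c)"
      using c assms(4) by (intro cos_monotone_0_pi_le) (auto intro: arccos_lbound)
    then show "cos \<theta> \<le> c" using c by simp
  next
    assume "cos \<theta> \<le> c"
    then have "arccos c \<le> arccos (cos \<theta>)" using c by (intro arccos_le_arccos) auto
    then show "arccos c \<le> \<theta>" using assms(3,4) by (simp add: arccos_cos)
  qed
  also have "\<dots> \<longleftrightarrow> cos \<theta> * sph_r\<^sup>2 \<le> z \<bullet> y"
    using sph_r_pos by (simp add: c_def field_simps)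
  finally show ?thesis .
qed

lemma inner_bound_of_near_orthogonal:
  fixes x y z :: "'a::real_inner"
  assumes "norm y = r" "norm z = r" "r > 0" "x \<bullet> y = 0"
    and "0 \<le> \<theta>" "\<theta> \<le> pi/2" "cos \<theta> * r\<^sup>2 \<le> z \<bullet> y"
  shows "\<bar>x \<bullet> z\<bar> \<le> sin \<theta> * norm x * r"
proof -
  define c where "c = (z \<bullet> y) / r\<^sup>2"
  have zy: "z \<bullet> y = c * r\<^sup>2" using assms(3) by (simp add: c_def)
  have "\<bar>z \<bullet> y\<bar> \<le> r\<^sup>2" using Cauchy_Schwarz_ineq2[of z y] assms by (simp add: power2_eq_square)
  then have c: "cos \<theta> \<le> c" "c \<le> 1" using assms by (auto simp: c_def field_simps)
  have "0 \<le> cos \<theta>" "0 \<le> sin \<theta>" using assms(5,6) by (auto intro: cos_ge_zero sin_ge_zero)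
  have c_sq: "c\<^sup>2 \<le> 1" using c \<open>0 \<le> cos \<theta>\<close> by (intro power_le_one) auto
  have "(cos \<theta>)\<^sup>2 \<le> c\<^sup>2" using c \<open>0 \<le> cos \<theta>\<close> by (intro power_mono) auto
  then have "1 - c\<^sup>2 \<le> (sin \<theta>)\<^sup>2" by (simp add: sin_squared_eq)
  then have sqrt_le: "sqrt (1 - c\<^sup>2) \<le> sin \<theta>"
    using \<open>0 \<le> sin \<theta>\<close> real_sqrt_le_mono by fastforce
  have "(norm (z - c *\<^sub>R y))\<^sup>2 = z \<bullet> z - 2 * c * (z \<bullet> y) + c\<^sup>2 * (y \<bullet> y)"
    unfolding power2_norm_eq_inner
    by (simp add: inner_diff_left inner_diff_right inner_commute power2_eq_square algebra_simps)
  also have "\<dots> = r\<^sup>2 * (1 - c\<^sup>2)"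
    unfolding zy by (simp add: assms(1,2) flip: power2_norm_eq_inner) (simp add: algebra_simps power2_eq_square)
  also have "\<dots> = (r * sqrt (1 - c\<^sup>2))\<^sup>2"
    using c_sq by (simp add: power_mult_distrib)
  finally have "norm (z - c *\<^sub>R y) = r * sqrt (1 - c\<^sup>2)"
    by (rule power2_eq_imp_eq) (use assms(3) c_sq in auto)
  moreover have "x \<bullet> z = x \<bullet> (z - c *\<^sub>R y)" using assms(4) by (simp add: inner_diff_right)
  ultimately have "\<bar>x \<bullet> z\<bar> \<le> norm x * (r * sqrt (1 - c\<^sup>2))" by (metis Cauchy_Schwarz_ineq2)
  also have "\<dots> \<le> norm x * (r * sin \<theta>)"
    using sqrt_le assms(3) by (intro mult_left_mono) auto
  finally show ?thesis by (simp add: ac_simps)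
qed

lemma near_orthogonal_of_inner_bound:
  fixes x z :: "'a::real_inner"
  assumes "norm z = r" "r > 0" "0 \<le> \<theta>" "\<theta> < pi/2" "\<bar>x \<bullet> z\<bar> \<le> sin \<theta> * norm x * r"
  obtains y where "norm y = r" "x \<bullet> y = 0" "cos \<theta> * r\<^sup>2 \<le> z \<bullet> y"
proof (cases "x = 0")
  case True
  have "cos \<theta> * r\<^sup>2 \<le> 1 * r\<^sup>2" by (intro mult_right_mono) auto
  then have "cos \<theta> * r\<^sup>2 \<le> z \<bullet> z" using assms(1) by (simp flip: power2_norm_eq_inner)
  with True assms(1) show ?thesis by (intro that) auto
next
  case False
  \<comment> \<open>the witness is the rescaled projection of z onto the plane orthogonal to x\<close>
  define w where "w = z - ((x \<bullet> z) / (x \<bullet> x)) *\<^sub>R x"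
  have xw: "x \<bullet> w = 0" using False by (simp add: w_def inner_diff_right)
  have zw: "z \<bullet> w = (norm w)\<^sup>2"
    using xw by (simp add: w_def power2_norm_eq_inner inner_diff_left inner_commute)
  have "(x \<bullet> z)\<^sup>2 \<le> (sin \<theta> * norm x * r)\<^sup>2"
    using assms(5) by (metis abs_ge_zero power2_abs power_mono)
  then have "(x \<bullet> z)\<^sup>2 / (norm x)\<^sup>2 \<le> (sin \<theta> * r)\<^sup>2"
    using False by (simp add: field_simps power_mult_distrib)
  moreover have "(norm w)\<^sup>2 = r\<^sup>2 - (x \<bullet> z)\<^sup>2 / (norm x)\<^sup>2"
    using zw False assms(1) by (simp add: w_def inner_diff_right power2_eq_square
        flip: power2_norm_eq_inner) (simp add: power2_norm_eq_inner inner_commute)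
  ultimately have "(r * cos \<theta>)\<^sup>2 \<le> (norm w)\<^sup>2"
    by (simp add: power_mult_distrib cos_squared_eq algebra_simps)
  moreover have cos_pos: "cos \<theta> > 0" using assms(3,4) by (intro cos_gt_zero_pi) auto
  ultimately have w_ge: "r * cos \<theta> \<le> norm w" by (simp add: power2_le_iff_abs_le)
  then have "w \<noteq> 0" using mult_pos_pos[OF assms(2) cos_pos] by auto
  show ?thesis
  proof
    show "norm ((r / norm w) *\<^sub>R w) = r" using \<open>w \<noteq> 0\<close> assms(2) by simp
    show "x \<bullet> (r / norm w) *\<^sub>R w = 0" using xw by simp
    have "z \<bullet> (r / norm w) *\<^sub>R w = r * norm w"
      using zw \<open>w \<noteq> 0\<close> by (simp add: power2_eq_square)
    moreover have "cos \<theta> * r\<^sup>2 \<le> r * norm w"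
      using w_ge assms(2) by (simp add: power2_eq_square mult_left_mono algebra_simps)
    ultimately show "cos \<theta> * r\<^sup>2 \<le> z \<bullet> (r / norm w) *\<^sub>R w" by simp
  qed
qed

lemma passes_through_sdisk_iff:
  assumes "norm z = sph_r" "0 \<le> \<theta>" "\<theta> < pi/2"
  shows "passes_through x (sdisk z (sph_r * \<theta>)) \<longleftrightarrow> \<bar>x \<bullet> z\<bar> \<le> sin \<theta> * norm x * sph_r"
proof -
  have "passes_through x (sdisk z (sph_r * \<theta>)) \<longleftrightarrow>
      (\<exists>y. norm y = sph_r \<and> x \<bullet> y = 0 \<and> cos \<theta> * sph_r\<^sup>2 \<le> z \<bullet> y)"
    using sdist_le_iff[OF _ assms(1,2)] assms(3) pi_gt_zero
    by (auto simp: passes_through_def great_circle_def sdisk_def S2_def)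
  also have "\<dots> \<longleftrightarrow> \<bar>x \<bullet> z\<bar> \<le> sin \<theta> * norm x * sph_r"
  proof
    assume "\<exists>y. norm y = sph_r \<and> x \<bullet> y = 0 \<and> cos \<theta> * sph_r\<^sup>2 \<le> z \<bullet> y"
    then obtain y where "norm y = sph_r" "x \<bullet> y = 0" "cos \<theta> * sph_r\<^sup>2 \<le> z \<bullet> y" by blast
    with assms show "\<bar>x \<bullet> z\<bar> \<le> sin \<theta> * norm x * sph_r"
      by (intro inner_bound_of_near_orthogonal[where y = y]) (auto simp: sph_r_pos)
  next
    assume "\<bar>x \<bullet> z\<bar> \<le> sin \<theta> * norm x * sph_r"
    then obtain y where "norm y = sph_r" "x \<bullet> y = 0" "cos \<theta> * sph_r\<^sup>2 \<le> z \<bullet> y"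
      by (rule near_orthogonal_of_inner_bound[OF assms(1) sph_r_pos assms(2,3)])
    then show "\<exists>y. norm y = sph_r \<and> x \<bullet> y = 0 \<and> cos \<theta> * sph_r\<^sup>2 \<le> z \<bullet> y" by blast
  qed
  finally show ?thesis .
qed

definition cone_band :: "real \<Rightarrow> 'a::real_inner \<Rightarrow> 'a set" where
  "cone_band s c = {x. \<bar>x \<bullet> c\<bar> \<le> s * norm x * norm c}"

lemma cone_band_scaleR: "t \<noteq> 0 \<Longrightarrow> cone_band s (t *\<^sub>R c) = cone_band s c"
  by (auto simp: cone_band_def abs_mult ac_simps)

lemma cone_band_positive_scaleR: "t > 0 \<Longrightarrow> t *\<^sub>R v \<in> cone_band s c \<longleftrightarrow> v \<in> cone_band s c"
  by (simp add: cone_band_def abs_mult mult.assoc mult.left_commute[of t])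

lemma cone_band_axis: "cone_band s (axis i 1) = {v::real^'n. \<bar>v $ i\<bar> \<le> s * norm v}"
  by (simp add: cone_band_def inner_axis)

lemma sets_cone_band [measurable]: "cone_band s (c::'a::euclidean_space) \<in> sets borel"
  unfolding cone_band_def by measurable

lemma orthogonal_transformation_image_cone_band:
  fixes f :: "'a::euclidean_space \<Rightarrow> 'a"
  assumes f: "orthogonal_transformation f"
  shows "f ` cone_band s c = cone_band s (f c)"
proof -
  have iff: "f x \<in> cone_band s (f c) \<longleftrightarrow> x \<in> cone_band s c" for x
    using f by (simp add: cone_band_def orthogonal_transformation_norm orthogonal_transformation_def)
  show ?thesis
  proof (intro set_eqI iffI)
    fix y assume "y \<in> cone_band s (f c)"
    moreover obtain x where "y = f x"
      using orthogonal_transformation_surj[OF f] by (metis surjD)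
    ultimately show "y \<in> f ` cone_band s c" using iff by auto
  qed (use iff in auto)
qed

text \<open>When cross3 a b = 0, isect_pt a b t is the junk point 0, and no disk around 0 meets S2.\<close>

definition crossing_band :: "real \<Rightarrow> real^3 \<Rightarrow> real^3 \<Rightarrow> (real^3) set" where
  "crossing_band s a b = (if cross3 a b = 0 then {} else cone_band s (cross3 a b))"

lemma mem_crossing_band_iff:
  "x \<in> crossing_band s a b \<longleftrightarrow> cross3 a b \<noteq> 0 \<and> \<bar>x \<bullet> cross3 a b\<bar> \<le> s * norm x * norm (cross3 a b)"
  by (simp add: crossing_band_def cone_band_def)

lemma crossing_band_commute: "crossing_band s a b = crossing_band s b a"
proof -
  have "cross3 b a = - cross3 a b" by (simp add: cross3_simps)
  then show ?thesis by (simp add: crossing_band_def cone_band_def)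
qed

lemma passes_through_isect_pt_iff:
  assumes "0 \<le> \<theta>" "\<theta> < pi/2"
  shows "passes_through x (sdisk (isect_pt a b t) (sph_r * \<theta>)) \<longleftrightarrow> x \<in> crossing_band (sin \<theta>) a b"
proof (cases "cross3 a b = 0")
  case True
  have "\<not> sdist 0 y \<le> sph_r * \<theta>" for y
    using assms sph_r_pos by (simp add: sdist_def)
  then show ?thesis
    using True by (auto simp: isect_pt_def passes_through_def sdisk_def crossing_band_def)
next
  case False
  define u where "u = (if t then 1 else -1) * (sph_r / norm (cross3 a b))"
  have "u \<noteq> 0" using False sph_r_pos by (simp add: u_def)
  have z: "isect_pt a b t = u *\<^sub>R cross3 a b" by (simp add: isect_pt_def u_def)
  have "norm (isect_pt a b t) = sph_r" using False sph_r_pos by (simp add: z u_def abs_mult)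
  then have "passes_through x (sdisk (isect_pt a b t) (sph_r * \<theta>)) \<longleftrightarrow>
      x \<in> cone_band (sin \<theta>) (isect_pt a b t)"
    by (simp add: passes_through_sdisk_iff[OF _ assms] cone_band_def)
  then show ?thesis using False \<open>u \<noteq> 0\<close> by (simp add: z cone_band_scaleR crossing_band_def)
qed

section \<open>The uniform distribution on the sphere\<close>

lemma measure_lborel_cbox_3:
  fixes a b :: "real^3"
  assumes "\<forall>i. a $ i \<le> b $ i"
  shows "measure lborel (cbox a b) = (b$1 - a$1) * (b$2 - a$2) * (b$3 - a$3)"
proof -
  have "a \<in> cbox a b" using assms by (simp add: mem_box_cart)
  then have "measure lborel (cbox a b) = (\<Prod>i\<in>UNIV. b$i - a$i)"
    using content_cbox_cart[of a b] by auto
  then show ?thesis unfolding UNIV_3 by simp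
qed

lemma measure_unit_ball_3: "measure lborel (ball (0::real^3) 1) = 4/3 * pi"
  using sphere_volume[where r=1 and c="0::real^3"] by simp

lemma emeasure_unit_ball_3: "emeasure lborel (ball (0::real^3) 1) = ennreal (4/3 * pi)"
  using emeasure_ball[where c="0::real^3" and r=1] by (simp add: unit_ball_vol_3)

lemma prob_space_unif_S2: "prob_space unif_S2"
  unfolding unif_S2_def
  by (intro prob_space.prob_space_distr prob_space_uniform_measure)
    (simp_all add: emeasure_unit_ball_3)

lemma sets_unif_S2 [simp, measurable_cong]: "sets unif_S2 = sets borel"
  by (simp add: unif_S2_def)

lemma space_unif_S2 [simp]: "space unif_S2 = UNIV"
  by (simp add: unif_S2_def)

lemma measure_unif_S2_cone:
  assumes E: "E \<in> sets borel" and cone: "\<And>t v. t > 0 \<Longrightarrow> t *\<^sub>R v \<in> E \<longleftrightarrow> v \<in> E"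
  shows "measure unif_S2 E = measure lborel (ball 0 1 \<inter> E) / (4/3 * pi)"
proof -
  have "(sph_r / norm v) *\<^sub>R v \<in> E \<longleftrightarrow> v \<in> E" for v
    by (cases "v = 0") (simp_all add: cone sph_r_pos)
  then have "(\<lambda>v. (sph_r / norm v) *\<^sub>R v) -` E = E" by blast
  then have "measure unif_S2 E = measure (uniform_measure lborel (ball 0 1)) E"
    using E unfolding unif_S2_def by (subst measure_distr) auto
  also have "\<dots> = measure lborel (ball 0 1 \<inter> E) / (4/3 * pi)"
    using E by (subst measure_uniform_measure) (simp_all add: emeasure_unit_ball_3 measure_unit_ball_3)
  finally show ?thesis .
qed

lemma measure_ball_Int_cone_band_eq_axis:
  fixes c :: "real^3"
  assumes "c \<noteq> 0"
  shows "measure lborel (ball 0 1 \<inter> cone_band s c) = measure lborel (ball 0 1 \<inter> cone_band s (axis 1 1 :: real^3))"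
proof -
  obtain f where f: "orthogonal_transformation f" "f (axis 1 1 :: real^3) = c /\<^sub>R norm c"
    using orthogonal_transformation_exists_1[of "axis 1 1" "c /\<^sub>R norm c"] assms by auto
  have "f 0 = 0" using f(1) by (simp add: orthogonal_transformation_def linear_0)
  have img: "f ` (ball 0 1 \<inter> cone_band s (axis 1 1)) = ball 0 1 \<inter> cone_band s c"
    using f assms \<open>f 0 = 0\<close>
    by (simp add: image_Int orthogonal_transformation_inj image_orthogonal_transformation_ball
        orthogonal_transformation_image_cone_band cone_band_scaleR)
  have borel: "ball 0 1 \<inter> cone_band s d \<in> sets lborel" for d :: "real^3"
    by measurable
  have "ball 0 1 \<inter> cone_band s (axis 1 1) \<in> lmeasurable"
    by (intro bounded_set_imp_lmeasurable sets_completionI_sets borel) auto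
  from measure_orthogonal_image[OF f(1) this]
  show ?thesis by (simp add: img measure_completion borel)
qed

lemma fmeasurable_ball_Int:
  "A \<in> sets borel \<Longrightarrow> ball (0::real^3) 1 \<inter> A \<in> fmeasurable lborel"
  by (intro fmeasurable_Int_fmeasurable) (auto simp: fmeasurable_def emeasure_unit_ball_3)

lemma measure_ball_Int_cone_band_axis_le:
  assumes "0 \<le> s"
  shows "measure lborel (ball 0 1 \<inter> cone_band s (axis 1 1 :: real^3)) \<le> 8 * s"
proof -
  have "ball 0 1 \<inter> cone_band s (axis 1 1) \<subseteq> cbox (vector [-s, -1, -1]) (vector [s, 1, 1] :: real^3)"
  proof
    fix v :: "real^3" assume v: "v \<in> ball 0 1 \<inter> cone_band s (axis 1 1)"
    then have "\<bar>v $ 1\<bar> \<le> s * norm v" "norm v < 1" by (simp_all add: cone_band_axis)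
    moreover have "s * norm v \<le> s" using assms \<open>norm v < 1\<close> by (intro mult_left_le) auto
    ultimately have "\<bar>v $ 1\<bar> \<le> s" by linarith
    moreover have "\<bar>v $ i\<bar> \<le> 1" for i using component_le_norm_cart[of v i] \<open>norm v < 1\<close> by simp
    ultimately show "v \<in> cbox (vector [-s, -1, -1]) (vector [s, 1, 1])"
      by (auto simp: mem_box_cart forall_3 abs_le_iff)
  qed
  then have "measure lborel (ball 0 1 \<inter> cone_band s (axis 1 1 :: real^3))
      \<le> measure lborel (cbox (vector [-s, -1, -1]) (vector [s, 1, 1] :: real^3))"
    by (intro measure_mono_fmeasurable) auto
  also have "\<dots> = 8 * s" using assms by (subst measure_lborel_cbox_3) (auto simp: forall_3)
  finally show ?thesis .
qed

lemma measure_ball_Int_cone_band_axis_ge: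
  assumes "0 \<le> s" "s \<le> 1"
  shows "3 * s / 128 \<le> measure lborel (ball 0 1 \<inter> cone_band s (axis 1 1 :: real^3))"
proof -
  let ?B = "cbox (vector [-s/8, 1/4, -1/8]) (vector [s/8, 5/8, 1/8]) :: (real^3) set"
  have "?B \<subseteq> ball 0 1 \<inter> cone_band s (axis 1 1)"
  proof
    fix v :: "real^3" assume "v \<in> ?B"
    then have v: "\<bar>v $ 1\<bar> \<le> s/8" "1/4 \<le> v $ 2" "v $ 2 \<le> 5/8" "\<bar>v $ 3\<bar> \<le> 1/8"
      by (auto simp: mem_box_cart forall_3)
    have "norm v \<le> \<bar>v $ 1\<bar> + \<bar>v $ 2\<bar> + \<bar>v $ 3\<bar>"
      using norm_le_l1_cart[of v] by (simp add: sum_3)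
    then have "norm v < 1" using v assms by linarith
    moreover have "s * (1/4) \<le> s * norm v"
      using component_le_norm_cart[of v 2] v assms by (intro mult_left_mono) auto
    ultimately show "v \<in> ball 0 1 \<inter> cone_band s (axis 1 1)"
      using v by (simp add: cone_band_axis)
  qed
  then have "measure lborel ?B \<le> measure lborel (ball 0 1 \<inter> cone_band s (axis 1 1 :: real^3))"
    by (intro measure_mono_fmeasurable fmeasurable_ball_Int) auto
  moreover have "measure lborel ?B = 3 * s / 128"
    using assms by (subst measure_lborel_cbox_3) (auto simp: forall_3)
  ultimately show ?thesis by simp
qed

lemma measure_unif_S2_cone_band_eq:
  fixes c :: "real^3"
  assumes "c \<noteq> 0"
  shows "measure unif_S2 (cone_band s c) = measure lborel (ball 0 1 \<inter> cone_band s (axis 1 1 :: real^3)) / (4/3 * pi)"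
  unfolding measure_ball_Int_cone_band_eq_axis[OF assms, symmetric]
  by (simp add: measure_unif_S2_cone cone_band_positive_scaleR)

lemma measure_unif_S2_cone_band_le:
  fixes c :: "real^3"
  assumes "c \<noteq> 0" "0 \<le> s"
  shows "measure unif_S2 (cone_band s c) \<le> 2 * s"
proof -
  have "measure unif_S2 (cone_band s c) = measure lborel (ball 0 1 \<inter> cone_band s (axis 1 1 :: real^3)) / (4/3 * pi)"
    by (rule measure_unif_S2_cone_band_eq[OF assms(1)])
  also have "\<dots> \<le> 8 * s / (4/3 * pi)"
    using measure_ball_Int_cone_band_axis_le[OF assms(2)] by (rule divide_right_mono) simp
  also have "\<dots> = s * (6 / pi)" by (simp add: field_simps)
  also have "\<dots> \<le> s * 2"
    using pi_gt3 assms(2) by (intro mult_left_mono) (auto simp: field_simps)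
  finally show ?thesis by simp
qed

lemma measure_unif_S2_cone_band_ge:
  fixes c :: "real^3"
  assumes "c \<noteq> 0" "0 \<le> s" "s \<le> 1"
  shows "s / 256 \<le> measure unif_S2 (cone_band s c)"
proof -
  have "s / 256 = s * (1 / 256)" by simp
  also have "\<dots> \<le> s * (9 / (512 * pi))"
    using pi_less_4 assms(2) by (intro mult_left_mono) (auto simp: field_simps)
  also have "\<dots> = (3 * s / 128) / (4/3 * pi)" by (simp add: field_simps)
  also have "\<dots> \<le> measure lborel (ball 0 1 \<inter> cone_band s (axis 1 1 :: real^3)) / (4/3 * pi)"
    using measure_ball_Int_cone_band_axis_ge[OF assms(2,3)] by (rule divide_right_mono) simp
  also have "\<dots> = measure unif_S2 (cone_band s c)"
    by (rule measure_unif_S2_cone_band_eq[OF assms(1), symmetric])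
  finally show ?thesis .
qed

lemma null_sets_unif_S2_plane:
  fixes w :: "real^3"
  assumes "w \<noteq> 0"
  shows "{x. x \<bullet> w = 0} \<in> null_sets unif_S2"
proof -
  interpret prob_space unif_S2 by (rule prob_space_unif_S2)
  let ?\<mu> = "measure unif_S2 {x. x \<bullet> w = 0}"
  have "?\<mu> \<le> 0 + e" if "0 < e" for e
  proof -
    have "?\<mu> \<le> measure unif_S2 (cone_band (e/2) w)"
      using that by (intro finite_measure_mono) (auto simp: cone_band_def)
    then show ?thesis using measure_unif_S2_cone_band_le[OF assms, of "e/2"] that by simp
  qed
  then have "?\<mu> \<le> 0" by (rule field_le_epsilon)
  then have "?\<mu> = 0" using measure_nonneg[of unif_S2] by (simp add: antisym)
  then show ?thesis by (simp add: emeasure_eq_measure null_sets_def)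
qed

lemma AE_unif_S2_nonzero: "AE y in unif_S2. y \<noteq> 0"
  by (rule AE_I'[OF null_sets_unif_S2_plane[of "axis 1 1"]]) auto

lemma AE_unif_S2_cross3_nonzero:
  fixes a :: "real^3"
  assumes "a \<noteq> 0"
  shows "AE y in unif_S2. cross3 a y \<noteq> 0"
proof -
  obtain e :: "real^3" where e: "cross3 a e \<noteq> 0"
    using cross_basis_nonzero[OF assms] by blast
  have "y \<bullet> cross3 a e = 0" if "cross3 a y = 0" for y
  proof -
    have "y \<bullet> cross3 a e = cross3 y a \<bullet> e"
      by (metis cross_triple inner_commute)
    also have "cross3 y a = - cross3 a y" by (simp add: cross3_simps)
    finally show ?thesis using that by simp
  qed
  then show ?thesis by (intro AE_I'[OF null_sets_unif_S2_plane[OF e]]) auto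
qed

section \<open>Counting and conditioning in finite products\<close>

lemma real_card_filter_eq_sum: "finite K \<Longrightarrow> real (card {k\<in>K. P k}) = (\<Sum>k\<in>K. if P k then 1 else 0)"
  by (simp add: sum.inter_filter[symmetric])

lemma exp_mult_card_eq_prod:
  assumes "finite K"
  shows "exp (l * real (card {k\<in>K. P k})) = (\<Prod>k\<in>K. if P k then exp l else 1)"
proof -
  have "exp (l * real (card {k\<in>K. P k})) = (\<Prod>k\<in>K. exp (l * (if P k then 1 else 0)))"
    using assms by (simp add: real_card_filter_eq_sum sum_distrib_left exp_sum)
  also have "\<dots> = (\<Prod>k\<in>K. if P k then exp l else 1)"
    by (rule prod.cong) auto
  finally show ?thesis .
qed

lemma borel_measurable_real_card [measurable (raw)]:
  assumes "finite K" "\<And>k. k \<in> K \<Longrightarrow> Measurable.pred M (P k)"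
  shows "(\<lambda>x. real (card {k\<in>K. P k x})) \<in> borel_measurable M"
proof -
  have "(\<lambda>x. \<Sum>k\<in>K. if P k x then 1 else 0 :: real) \<in> borel_measurable M"
    using assms(2) by measurable
  then show ?thesis using assms(1) by (simp add: real_card_filter_eq_sum)
qed

lemma indicator_mgf_nonneg:
  assumes "prob_space N"
  shows "0 \<le> 1 + measure N A * (exp l - 1)"
proof -
  have "0 \<le> (1 - measure N A) + measure N A * exp l"
    using prob_space.prob_le_1[OF assms, of A] by (intro add_nonneg_nonneg) auto
  then show ?thesis by (simp add: algebra_simps)
qed

lemma nn_integral_exp_mult_card_PiM:
  assumes N: "prob_space N" and K: "finite K" and A: "A \<in> sets N"
  shows "(\<integral>\<^sup>+X. ennreal (exp (l * real (card {k\<in>K. X k \<in> A}))) \<partial>PiM K (\<lambda>_. N))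
    = ennreal ((1 + measure N A * (exp l - 1)) ^ card K)"
proof -
  interpret N: prob_space N by (rule N)
  interpret product_sigma_finite "\<lambda>_. N"
    by (simp add: product_sigma_finite_def N.sigma_finite_measure_axioms)
  have one: "(\<integral>\<^sup>+x. ennreal (if x \<in> A then exp l else 1) \<partial>N) = ennreal (1 + measure N A * (exp l - 1))"
  proof -
    have "(\<integral>\<^sup>+x. ennreal (if x \<in> A then exp l else 1) \<partial>N)
        = (\<integral>\<^sup>+x. ennreal (exp l) * indicator A x + indicator (space N - A) x \<partial>N)"
      by (rule nn_integral_cong) (simp split: split_indicator)
    also have "\<dots> = ennreal (exp l) * emeasure N A + emeasure N (space N - A)"
      using A by (simp add: nn_integral_add nn_integral_cmult_indicator)
    also have "\<dots> = ennreal (exp l * measure N A + (1 - measure N A))"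
      using A by (simp add: N.emeasure_eq_measure N.prob_compl ennreal_mult ennreal_plus)
    finally show ?thesis by (simp add: algebra_simps)
  qed
  have "(\<integral>\<^sup>+X. ennreal (exp (l * real (card {k\<in>K. X k \<in> A}))) \<partial>PiM K (\<lambda>_. N))
      = (\<integral>\<^sup>+X. (\<Prod>k\<in>K. ennreal (if X k \<in> A then exp l else 1)) \<partial>PiM K (\<lambda>_. N))"
    using K by (simp add: exp_mult_card_eq_prod prod_ennreal)
  also have "\<dots> = (\<Prod>k\<in>K. ennreal (1 + measure N A * (exp l - 1)))"
    using K A by (subst product_nn_integral_prod) (auto simp: one)
  also have "\<dots> = ennreal ((1 + measure N A * (exp l - 1)) ^ card K)"
    using indicator_mgf_nonneg[OF N] by (simp add: prod_ennreal ennreal_power)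
  finally show ?thesis .
qed

lemma emeasure_PiM_card_tail:
  assumes N: "prob_space N" and K: "finite K" and A[measurable]: "A \<in> sets N"
  shows "emeasure (PiM K (\<lambda>_. N)) {X \<in> space (PiM K (\<lambda>_. N)). t \<le> l * real (card {k\<in>K. X k \<in> A})}
    \<le> ennreal (exp (real (card K) * measure N A * (exp l - 1) - t))"
proof -
  interpret N: prob_space N by (rule N)
  let ?S = "\<lambda>X. l * real (card {k\<in>K. X k \<in> A})"
  let ?P = "PiM K (\<lambda>_. N)"
  have "{X \<in> space ?P. t \<le> ?S X} \<in> sets ?P"
    using K by measurable
  then have "emeasure ?P {X \<in> space ?P. t \<le> ?S X} = (\<integral>\<^sup>+X. indicator {X \<in> space ?P. t \<le> ?S X} X \<partial>?P)"
    by simp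
  also have "\<dots> \<le> (\<integral>\<^sup>+X. ennreal (exp (- t)) * ennreal (exp (?S X)) \<partial>?P)"
    by (intro nn_integral_mono) (auto simp: indicator_def ennreal_mult' [symmetric] exp_add [symmetric])
  also have "\<dots> = ennreal (exp (- t)) * ennreal ((1 + measure N A * (exp l - 1)) ^ card K)"
    using K by (subst nn_integral_cmult) (measurable, simp add: nn_integral_exp_mult_card_PiM[OF N K A])
  also have "\<dots> \<le> ennreal (exp (- t)) * ennreal (exp (measure N A * (exp l - 1)) ^ card K)"
    using indicator_mgf_nonneg[OF N]
    by (intro mult_left_mono ennreal_leI power_mono) (auto simp: exp_ge_add_one_self)
  also have "\<dots> = ennreal (exp (real (card K) * measure N A * (exp l - 1) - t))"
    by (simp add: ennreal_mult' [symmetric] exp_of_nat_mult [symmetric] exp_add [symmetric] algebra_simps)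
  finally show ?thesis .
qed

lemma emeasure_PiM_card_outside:
  assumes N: "prob_space N" and K: "finite K" and A[measurable]: "A \<in> sets N"
  shows "emeasure (PiM K (\<lambda>_. N))
      {X \<in> space (PiM K (\<lambda>_. N)). \<not> (lo \<le> real (card {k\<in>K. X k \<in> A}) \<and> real (card {k\<in>K. X k \<in> A}) \<le> hi)}
    \<le> ennreal (exp (real (card K) * measure N A * (exp 1 - 1) - hi)
        + exp (lo - real (card K) * measure N A * (1 - exp (-1))))"
proof -
  let ?P = "PiM K (\<lambda>_. N)"
  let ?S = "\<lambda>X. real (card {k\<in>K. X k \<in> A})"
  have "emeasure ?P {X \<in> space ?P. \<not> (lo \<le> ?S X \<and> ?S X \<le> hi)}
      \<le> emeasure ?P ({X \<in> space ?P. hi \<le> 1 * ?S X} \<union> {X \<in> space ?P. - lo \<le> -1 * ?S X})"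
    using K by (intro emeasure_mono) auto
  also have "\<dots> \<le> emeasure ?P {X \<in> space ?P. hi \<le> 1 * ?S X} + emeasure ?P {X \<in> space ?P. - lo \<le> -1 * ?S X}"
    using K by (intro emeasure_subadditive) measurable
  also have "\<dots> \<le> ennreal (exp (real (card K) * measure N A * (exp 1 - 1) - hi))
      + ennreal (exp (real (card K) * measure N A * (exp (-1) - 1) - - lo))"
    by (intro add_mono emeasure_PiM_card_tail[OF N K A])
  finally show ?thesis by (simp add: ennreal_plus algebra_simps)
qed

lemma sets_PiM_fun_upd_section:
  assumes "y \<in> space (M i)" "B \<in> sets (PiM (insert i I) M)"
  shows "{X \<in> space (PiM I M). X(i := y) \<in> B} \<in> sets (PiM I M)"
proof -
  have "(\<lambda>X. X(i := y)) \<in> measurable (PiM I M) (PiM (insert i I) M)"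
    using assms(1) by (intro measurable_fun_upd[where J=I]) auto
  from measurable_sets[OF this assms(2)] show ?thesis
    by (simp add: vimage_def Int_def conj_commute)
qed

lemma emeasure_PiM_insert_le_AE:
  fixes \<epsilon> :: ennreal
  assumes M: "product_sigma_finite M" "prob_space (M i)" and I: "finite I" "i \<notin> I"
    and B: "B \<in> sets (PiM (insert i I) M)"
    and AE_sections: "AE y in M i. emeasure (PiM I M) {X \<in> space (PiM I M). X(i := y) \<in> B} \<le> \<epsilon>"
  shows "emeasure (PiM (insert i I) M) B \<le> \<epsilon>"
proof -
  interpret product_sigma_finite M by (rule M(1))
  interpret Mi: prob_space "M i" by (rule M(2))
  have section_eq: "(\<integral>\<^sup>+X. indicator B (X(i := y)) \<partial>PiM I M) = emeasure (PiM I M) {X \<in> space (PiM I M). X(i := y) \<in> B}"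
    if "y \<in> space (M i)" for y
  proof -
    have "(\<integral>\<^sup>+X. indicator B (X(i := y)) \<partial>PiM I M)
        = (\<integral>\<^sup>+X. indicator {X \<in> space (PiM I M). X(i := y) \<in> B} X \<partial>PiM I M)"
      by (rule nn_integral_cong) (simp split: split_indicator)
    then show ?thesis using sets_PiM_fun_upd_section[OF that B] by simp
  qed
  have "emeasure (PiM (insert i I) M) B = (\<integral>\<^sup>+X. indicator B X \<partial>PiM (insert i I) M)"
    using B by simp
  also have "\<dots> = (\<integral>\<^sup>+y. (\<integral>\<^sup>+X. indicator B (X(i := y)) \<partial>PiM I M) \<partial>M i)"
    using B I by (intro product_nn_integral_insert_rev) auto
  also have "\<dots> \<le> (\<integral>\<^sup>+y. \<epsilon> \<partial>M i)"
  proof (rule nn_integral_mono_AE)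
    show "AE y in M i. (\<integral>\<^sup>+X. indicator B (X(i := y)) \<partial>PiM I M) \<le> \<epsilon>"
      using AE_sections AE_space by eventually_elim (simp add: section_eq)
  qed
  also have "\<dots> = \<epsilon>" by (simp add: Mi.emeasure_space_1)
  finally show ?thesis .
qed

lemma (in prob_space) prob_Ball_ge:
  assumes "finite I" "\<And>i. i \<in> I \<Longrightarrow> {x \<in> space M. P i x} \<in> events"
    and "\<And>i. i \<in> I \<Longrightarrow> prob {x \<in> space M. \<not> P i x} \<le> \<epsilon>"
  shows "1 - real (card I) * \<epsilon> \<le> prob {x \<in> space M. \<forall>i\<in>I. P i x}"
proof -
  let ?bad = "\<Union>i\<in>I. {x \<in> space M. \<not> P i x}"
  have bad_sets: "{x \<in> space M. \<not> P i x} \<in> events" if "i \<in> I" for i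
  proof -
    have "{x \<in> space M. \<not> P i x} = space M - {x \<in> space M. P i x}" by auto
    then show ?thesis using assms(2)[OF that] by (simp add: sets.Diff)
  qed
  have "prob ?bad \<le> (\<Sum>i\<in>I. prob {x \<in> space M. \<not> P i x})"
    using assms(1) bad_sets by (rule measure_UNION_le)
  also have "\<dots> \<le> real (card I) * \<epsilon>"
    using sum_bounded_above[of I "\<lambda>i. prob {x \<in> space M. \<not> P i x}" \<epsilon>] assms(3) by simp
  finally have "prob ?bad \<le> real (card I) * \<epsilon>" .
  moreover have "{x \<in> space M. \<forall>i\<in>I. P i x} = space M - ?bad" by auto
  moreover have "?bad \<in> events" using assms(1) bad_sets by blast
  ultimately show ?thesis by (simp add: prob_compl)
qed

lemma measure_pair_measure_Times_space:
  assumes "prob_space N" "A \<in> sets M"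
  shows "measure (M \<Otimes>\<^sub>M N) (A \<times> space N) = measure M A"
proof -
  interpret N: prob_space N by (rule assms(1))
  have "emeasure (M \<Otimes>\<^sub>M N) (A \<times> space N) = emeasure M A"
    using assms(2) by (simp add: N.emeasure_pair_measure_Times N.emeasure_space_1)
  then show ?thesis by (simp add: measure_def)
qed

section \<open>Circles through the disk at a crossing\<close>

lemma borel_measurable_cross3 [measurable (raw)]:
  assumes "f \<in> borel_measurable M" "g \<in> borel_measurable M"
  shows "(\<lambda>x. cross3 (f x) (g x)) \<in> borel_measurable M"
proof -
  have "(\<lambda>p. cross3 (fst p) (snd p)) \<in> borel_measurable (borel :: ((real^3) \<times> (real^3)) measure)"
    by (intro borel_measurable_continuous_onI continuous_on_cross continuous_on_fst continuous_on_snd continuous_on_id)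
  from measurable_compose[OF borel_measurable_Pair[OF assms] this] show ?thesis by simp
qed

lemma pred_mem_crossing_band [measurable (raw)]:
  assumes "f \<in> borel_measurable M" "g \<in> borel_measurable M" "h \<in> borel_measurable M"
  shows "Measurable.pred M (\<lambda>x. f x \<in> crossing_band s (g x) (h x))"
  using assms unfolding mem_crossing_band_iff by measurable

lemma borel_measurable_component_unif_S2:
  "k \<in> I \<Longrightarrow> (\<lambda>X. X k) \<in> borel_measurable (PiM I (\<lambda>_. unif_S2))"
  using measurable_component_singleton[of k I "\<lambda>_. unif_S2"]
  by (simp add: measurable_cong_sets[OF refl sets_unif_S2])

definition crossing_count :: "real \<Rightarrow> nat \<Rightarrow> (nat \<Rightarrow> real^3) \<Rightarrow> nat \<Rightarrow> nat \<Rightarrow> nat" where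
  "crossing_count s n X i j = card {k\<in>{..<n}. X k \<in> crossing_band s (X i) (X j)}"

lemma borel_measurable_crossing_count [measurable]:
  assumes "i < n" "j < n"
  shows "(\<lambda>X. real (crossing_count s n X i j)) \<in> borel_measurable (PiM {..<n} (\<lambda>_. unif_S2))"
  unfolding crossing_count_def using assms
  by (intro borel_measurable_real_card pred_mem_crossing_band borel_measurable_component_unif_S2) auto

lemma crossing_count_fun_upd:
  assumes "i < n" "j < n" "i \<noteq> j" "cross3 a b \<noteq> 0" "0 \<le> s"
  shows "crossing_count s n (Y(j := b, i := a)) i j = 2 + card {k\<in>{..<n} - {i, j}. Y k \<in> cone_band s (cross3 a b)}"
proof -
  have "a \<in> cone_band s (cross3 a b)" "b \<in> cone_band s (cross3 a b)"
    using assms(5) by (simp_all add: cone_band_def dot_cross_self)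
  then have "{k\<in>{..<n}. (Y(j := b, i := a)) k \<in> crossing_band s a b}
      = insert i (insert j {k\<in>{..<n} - {i, j}. Y k \<in> cone_band s (cross3 a b)})"
    using assms by (auto simp: crossing_band_def)
  then show ?thesis using assms(3) by (simp add: crossing_count_def)
qed

lemma emeasure_crossing_count_section:
  fixes s lo hi :: real
  assumes s: "0 \<le> s" "s \<le> 1" and ij: "i < n" "j < n" "i \<noteq> j" and ab: "cross3 a b \<noteq> 0"
  defines "K \<equiv> {..<n} - {i, j}"
  shows "emeasure (PiM K (\<lambda>_. unif_S2)) {Y \<in> space (PiM K (\<lambda>_. unif_S2)).
        \<not> (lo \<le> real (crossing_count s n (Y(j := b, i := a)) i j) \<and>
           real (crossing_count s n (Y(j := b, i := a)) i j) \<le> hi)}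
    \<le> ennreal (exp (real (n - 2) * (2 * s) * (exp 1 - 1) - (hi - 2))
        + exp ((lo - 2) - real (n - 2) * (s / 256) * (1 - exp (-1))))"
proof -
  let ?A = "cone_band s (cross3 a b)"
  let ?p = "measure unif_S2 ?A"
  have K: "finite K" "card K = n - 2"
    using ij by (auto simp: K_def card_Diff_subset)
  have "emeasure (PiM K (\<lambda>_. unif_S2)) {Y \<in> space (PiM K (\<lambda>_. unif_S2)).
        \<not> (lo \<le> real (crossing_count s n (Y(j := b, i := a)) i j) \<and>
           real (crossing_count s n (Y(j := b, i := a)) i j) \<le> hi)}
      = emeasure (PiM K (\<lambda>_. unif_S2)) {Y \<in> space (PiM K (\<lambda>_. unif_S2)).
        \<not> (lo - 2 \<le> real (card {k\<in>K. Y k \<in> ?A}) \<and> real (card {k\<in>K. Y k \<in> ?A}) \<le> hi - 2)}"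
    using crossing_count_fun_upd[OF ij ab s(1)] by (simp add: K_def algebra_simps)
  also have "\<dots> \<le> ennreal (exp (real (n - 2) * ?p * (exp 1 - 1) - (hi - 2))
      + exp ((lo - 2) - real (n - 2) * ?p * (1 - exp (-1))))"
    using emeasure_PiM_card_outside[OF prob_space_unif_S2 K(1), of ?A "lo - 2" "hi - 2"] K(2) by simp
  also have "\<dots> \<le> ennreal (exp (real (n - 2) * (2 * s) * (exp 1 - 1) - (hi - 2))
      + exp ((lo - 2) - real (n - 2) * (s / 256) * (1 - exp (-1))))"
  proof -
    have "real (n - 2) * ?p * (exp 1 - 1) \<le> real (n - 2) * (2 * s) * (exp 1 - 1)"
      using measure_unif_S2_cone_band_le[OF ab s(1)] by (intro mult_right_mono mult_left_mono) auto
    moreover have "real (n - 2) * (s / 256) * (1 - exp (-1)) \<le> real (n - 2) * ?p * (1 - exp (-1))"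
      using measure_unif_S2_cone_band_ge[OF ab s] by (intro mult_right_mono mult_left_mono) auto
    ultimately show ?thesis by (intro ennreal_leI add_mono) simp_all
  qed
  finally show ?thesis .
qed

text \<open>Condition on X i and X j, which are almost surely non-parallel; then G_i and G_j
  themselves are counted, and each of the other n - 2 circles is counted independently.\<close>

lemma emeasure_crossing_count_outside:
  fixes s lo hi :: real
  assumes s: "0 \<le> s" "s \<le> 1" and ij: "i < n" "j < n" "i \<noteq> j"
  shows "emeasure (PiM {..<n} (\<lambda>_. unif_S2))
      {X \<in> space (PiM {..<n} (\<lambda>_. unif_S2)).
        \<not> (lo \<le> real (crossing_count s n X i j) \<and> real (crossing_count s n X i j) \<le> hi)}
    \<le> ennreal (exp (real (n - 2) * (2 * s) * (exp 1 - 1) - (hi - 2))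
        + exp ((lo - 2) - real (n - 2) * (s / 256) * (1 - exp (-1))))"
    (is "emeasure _ ?B \<le> ?\<epsilon>")
proof -
  let ?U = "\<lambda>_::nat. unif_S2"
  define K where "K = {..<n} - {i, j}"
  have K: "finite K" "j \<notin> K" "i \<notin> insert j K"
    using ij by (auto simp: K_def)
  have n_eq: "{..<n} = insert i (insert j K)"
    using ij by (auto simp: K_def)
  have PS: "product_sigma_finite ?U"
    by (simp add: product_sigma_finite_def prob_space_imp_sigma_finite prob_space_unif_S2)
  have B_sets: "?B \<in> sets (PiM (insert i (insert j K)) ?U)"
    unfolding n_eq[symmetric] using ij by measurable
  have "emeasure (PiM (insert i (insert j K)) ?U) ?B \<le> ?\<epsilon>"
  proof (rule emeasure_PiM_insert_le_AE[OF PS prob_space_unif_S2 _ K(3) B_sets])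
    show "AE a in unif_S2. emeasure (PiM (insert j K) ?U) {Z \<in> space (PiM (insert j K) ?U). Z(i := a) \<in> ?B} \<le> ?\<epsilon>"
      using AE_unif_S2_nonzero
    proof eventually_elim
      case (elim a)
      show ?case
      proof (rule emeasure_PiM_insert_le_AE[OF PS prob_space_unif_S2 K(1,2)])
        show "{Z \<in> space (PiM (insert j K) ?U). Z(i := a) \<in> ?B} \<in> sets (PiM (insert j K) ?U)"
          using B_sets by (intro sets_PiM_fun_upd_section) auto
        show "AE b in unif_S2. emeasure (PiM K ?U) {Y \<in> space (PiM K ?U). Y(j := b) \<in>
            {Z \<in> space (PiM (insert j K) ?U). Z(i := a) \<in> ?B}} \<le> ?\<epsilon>"
          using AE_unif_S2_cross3_nonzero[OF elim]
        proof eventually_elim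
          case (elim b)
          have "{Y \<in> space (PiM K ?U). Y(j := b) \<in> {Z \<in> space (PiM (insert j K) ?U). Z(i := a) \<in> ?B}}
              = {Y \<in> space (PiM K ?U). \<not> (lo \<le> real (crossing_count s n (Y(j := b, i := a)) i j) \<and>
                  real (crossing_count s n (Y(j := b, i := a)) i j) \<le> hi)}"
            by (auto simp: n_eq space_PiM PiE_def extensional_def)
          then show ?case
            using emeasure_crossing_count_section[OF s ij elim, of lo hi] by (simp add: K_def)
        qed
      qed
    qed
  qed (use K in simp)
  then show ?thesis by (simp add: n_eq)
qed

lemma prob_crossing_counts_within:
  assumes "0 \<le> s" "s \<le> 1"
  shows "1 - real n ^ 2 * (exp (real (n - 2) * (2 * s) * (exp 1 - 1) - (hi - 2))
        + exp ((lo - 2) - real (n - 2) * (s / 256) * (1 - exp (-1))))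
    \<le> measure (PiM {..<n} (\<lambda>_. unif_S2)) {X \<in> space (PiM {..<n} (\<lambda>_. unif_S2)).
        \<forall>i<n. \<forall>j<n. i \<noteq> j \<longrightarrow> lo \<le> real (crossing_count s n X i j) \<and> real (crossing_count s n X i j) \<le> hi}"
    (is "1 - _ * ?\<epsilon> \<le> _")
proof -
  let ?P = "PiM {..<n} (\<lambda>_. unif_S2)"
  interpret prob_space ?P by (intro prob_space_PiM prob_space_unif_S2)
  define I where "I = {(i, j). i < n \<and> j < n \<and> i \<noteq> j}"
  have I: "finite I" "real (card I) \<le> real n ^ 2"
  proof -
    have "I \<subseteq> {..<n} \<times> {..<n}" by (auto simp: I_def)
    then show "finite I" "real (card I) \<le> real n ^ 2"
      using card_mono[of "{..<n} \<times> {..<n}" I] by (auto simp: power2_eq_square finite_subset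
          simp flip: of_nat_mult)
  qed
  have "1 - real n ^ 2 * ?\<epsilon> \<le> 1 - real (card I) * ?\<epsilon>"
    using I(2) by (intro diff_left_mono mult_right_mono) auto
  also have "\<dots> \<le> prob {X \<in> space ?P. \<forall>(i, j)\<in>I. lo \<le> real (crossing_count s n X i j) \<and> real (crossing_count s n X i j) \<le> hi}"
  proof (rule prob_Ball_ge[OF I(1)])
    fix p assume "p \<in> I"
    then obtain i j where p: "p = (i, j)" "i < n" "j < n" "i \<noteq> j" by (auto simp: I_def)
    note [measurable] = borel_measurable_crossing_count[OF p(2,3)]
    show "{X \<in> space ?P. case p of (i, j) \<Rightarrow> lo \<le> real (crossing_count s n X i j) \<and> real (crossing_count s n X i j) \<le> hi} \<in> events"
      unfolding p(1) prod.case by measurable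
    show "prob {X \<in> space ?P. \<not> (case p of (i, j) \<Rightarrow> lo \<le> real (crossing_count s n X i j) \<and> real (crossing_count s n X i j) \<le> hi)} \<le> ?\<epsilon>"
      using emeasure_crossing_count_outside[OF assms p(2-4), of lo hi]
      by (simp add: p(1) emeasure_eq_measure add_nonneg_nonneg del: ennreal_plus)
  qed
  also have "{X \<in> space ?P. \<forall>(i, j)\<in>I. lo \<le> real (crossing_count s n X i j) \<and> real (crossing_count s n X i j) \<le> hi}
      = {X \<in> space ?P. \<forall>i<n. \<forall>j<n. i \<noteq> j \<longrightarrow> lo \<le> real (crossing_count s n X i j) \<and> real (crossing_count s n X i j) \<le> hi}"
    by (auto simp: I_def)
  finally show ?thesis .
qed

section \<open>Typical configurations\<close>

lemma sin_ge_half: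
  fixes x :: real
  assumes "0 \<le> x" "x \<le> 1"
  shows "x / 2 \<le> sin x"
proof -
  have "(\<Sum>m<3. sin_coeff m * x ^ m) = x" by (simp add: eval_nat_numeral sin_coeff_def)
  then have "\<bar>sin x - x\<bar> \<le> inverse (fact 3) * \<bar>x\<bar> ^ 3"
    using Maclaurin_sin_bound[of x 3] by simp
  also have "\<dots> = x * x\<^sup>2 / 6" using assms by (simp add: eval_nat_numeral)
  also have "\<dots> \<le> x / 6" using assms by (simp add: mult_left_le power_le_one)
  finally show ?thesis by linarith
qed

lemma exp_1_bounds: "2 \<le> exp (1::real)" "exp (1::real) \<le> 4"
proof -
  show "2 \<le> exp (1::real)" using exp_ge_add_one_self[of 1] by simp
  have "1/2 \<le> exp (-1/2::real)" using exp_ge_add_one_self[of "-1/2"] by simp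
  then have "exp (1/2::real) \<le> 2" by (simp add: exp_minus field_simps)
  then have "exp (1/2::real) * exp (1/2) \<le> 2 * 2" by (intro mult_mono) auto
  then show "exp (1::real) \<le> 4" by (simp add: mult_exp_exp)
qed

lemma disk_radius_eq: "(2 + \<Delta>) * sqrt (pi / real n) = sph_r * (2 * pi * (2 + \<Delta>) / sqrt (real n))"
proof -
  have "sph_r * (2 * pi) = sqrt pi"
    by (simp add: sph_r_def field_simps)
  then have "sph_r * (2 * pi * (2 + \<Delta>) / sqrt (real n)) = (2 + \<Delta>) * (sqrt pi / sqrt (real n))"
    by (metis mult.commute mult.left_commute times_divide_eq_right)
  also have "\<dots> = (2 + \<Delta>) * sqrt (pi / real n)" by (simp add: real_sqrt_divide)
  finally show ?thesis by (rule sym)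
qed

lemma num_through_eq_crossing_count:
  assumes "0 \<le> \<theta>" "\<theta> < pi/2" "(2 + \<Delta>) * sqrt (pi / real n) = sph_r * \<theta>"
  shows "num_through \<Delta> n \<omega> i j = crossing_count (sin \<theta>) n (fst \<omega>) i j"
  unfolding num_through_def zpt_def crossing_count_def assms(3) passes_through_isect_pt_iff[OF assms(1,2)]
  by (cases "i \<le> j") (simp_all add: min_def max_def crossing_band_commute)

text \<open>With s = sin (A / sqrt n) the hit probability lies in [A / (512 sqrt n), 2 A / sqrt n],
  so the expected count is between A sqrt n / 1024 and 2 A sqrt n; the bounds A sqrt n / 4096
  and (6 A + 1) sqrt n leave room for the Chernoff exponents.\<close>

lemma chernoff_exponents_le:
  fixes A :: real and n :: nat
  assumes A: "8 \<le> A" and n: "4 \<le> n" "A \<le> sqrt (real n)"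
  defines "s \<equiv> sin (A / sqrt (real n))"
  shows "exp (real (n - 2) * (2 * s) * (exp 1 - 1) - ((6 * A + 1) * sqrt (real n) - 2))
      + exp ((A / 4096 * sqrt (real n) - 2) - real (n - 2) * (s / 256) * (1 - exp (-1)))
    \<le> exp (2 - sqrt (real n)) + exp (- sqrt (real n) / 512)"
proof -
  define r where "r = sqrt (real n)"
  define \<theta> where "\<theta> = A / r"
  have r: "r > 0" "real n = r * r" using n by (auto simp: r_def)
  have \<theta>: "0 \<le> \<theta>" "\<theta> \<le> 1" "real n * \<theta> = A * r"
  proof -
    show "0 \<le> \<theta>" using A r(1) by (simp add: \<theta>_def)
    show "\<theta> \<le> 1" using n(2) r(1) by (simp add: \<theta>_def r_def)
    show "real n * \<theta> = A * r" using r by (simp add: \<theta>_def)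
  qed
  have s: "\<theta> / 2 \<le> s" "s \<le> \<theta>"
    using sin_ge_half[OF \<theta>(1,2)] sin_x_le_x[OF \<theta>(1)] by (simp_all add: s_def \<theta>_def r_def)
  have e: "exp 1 - 1 \<le> (3::real)" "1/2 \<le> 1 - exp (-1::real)"
    using exp_1_bounds by (auto simp: exp_minus field_simps)
  have m: "real (n - 2) \<le> real n" "real n / 2 \<le> real (n - 2)" using n by auto
  have "real (n - 2) * (2 * s) * (exp 1 - 1) \<le> real n * (2 * \<theta>) * 3"
    using m s e \<theta> by (intro mult_mono) auto
  also have "\<dots> = 6 * A * r" using \<theta>(3) by simp
  finally have upper: "real (n - 2) * (2 * s) * (exp 1 - 1) - ((6 * A + 1) * r - 2) \<le> 2 - r"
    by (simp add: algebra_simps)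
  have "A * r / 2048 = (real n / 2) * (\<theta> / 2 / 256) * (1/2)" using \<theta>(3) by simp
  also have "\<dots> \<le> real (n - 2) * (s / 256) * (1 - exp (-1))"
    using m s e \<theta> by (intro mult_mono) auto
  finally have "(A / 4096 * r - 2) - real (n - 2) * (s / 256) * (1 - exp (-1)) \<le> - (A * r / 4096)"
    by simp
  also have "\<dots> \<le> - r / 512" using A r by (simp add: field_simps)
  finally have lower: "(A / 4096 * r - 2) - real (n - 2) * (s / 256) * (1 - exp (-1)) \<le> - r / 512" .
  show ?thesis using upper lower unfolding r_def[symmetric] by (intro add_mono) auto
qed

lemma prob_space_config_space: "prob_space (config_space n)"
  unfolding config_space_def
  by (intro prob_space_pair prob_space_PiM prob_space_unif_S2) (simp add: coin_def prob_space_measure_pmf)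

lemma prob_typical_config_ge:
  fixes \<Delta> :: real and n :: nat
  defines "A \<equiv> 2 * pi * (2 + \<Delta>)"
  assumes "\<Delta> > 0" "4 \<le> n" "A \<le> sqrt (real n)"
  shows "1 - real n ^ 2 * (exp (2 - sqrt (real n)) + exp (- sqrt (real n) / 512))
    \<le> measure (config_space n) {\<omega> \<in> space (config_space n). \<forall>i<n. \<forall>j<n. i \<noteq> j \<longrightarrow>
        A / 4096 * sqrt (real n) \<le> real (num_through \<Delta> n \<omega> i j) \<and>
        real (num_through \<Delta> n \<omega> i j) \<le> (6 * A + 1) * sqrt (real n)}"
proof -
  let ?lo = "A / 4096 * sqrt (real n)" and ?hi = "(6 * A + 1) * sqrt (real n)"
  have "2 * 2 \<le> pi * (2 + \<Delta>)" using pi_ge_two assms(2) by (intro mult_mono) auto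
  then have A: "8 \<le> A" by (simp add: A_def)
  define \<theta> where "\<theta> = A / sqrt (real n)"
  have "\<theta> \<le> 1" using A assms(3,4) by (simp add: \<theta>_def)
  moreover have "0 \<le> \<theta>" using A by (simp add: \<theta>_def)
  ultimately have \<theta>: "0 \<le> \<theta>" "\<theta> < pi / 2" using pi_gt3 by linarith+
  have s: "0 \<le> sin \<theta>" "sin \<theta> \<le> 1" using \<theta> by (auto intro: sin_ge_zero)
  let ?T = "{X \<in> space (PiM {..<n} (\<lambda>_. unif_S2)). \<forall>i<n. \<forall>j<n. i \<noteq> j \<longrightarrow>
      ?lo \<le> real (crossing_count (sin \<theta>) n X i j) \<and> real (crossing_count (sin \<theta>) n X i j) \<le> ?hi}"
  have event: "{\<omega> \<in> space (config_space n). \<forall>i<n. \<forall>j<n. i \<noteq> j \<longrightarrow>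
        ?lo \<le> real (num_through \<Delta> n \<omega> i j) \<and> real (num_through \<Delta> n \<omega> i j) \<le> ?hi}
      = ?T \<times> space (PiM (pairs n) (\<lambda>_. coin))"
    using num_through_eq_crossing_count[OF \<theta> disk_radius_eq[of \<Delta> n, folded A_def, folded \<theta>_def]]
    by (auto simp: config_space_def space_pair_measure simp del: space_PiM)
  have "prob_space (PiM (pairs n) (\<lambda>_. coin))"
    by (intro prob_space_PiM) (simp add: coin_def prob_space_measure_pmf)
  moreover have "?T \<in> sets (PiM {..<n} (\<lambda>_. unif_S2))"
    by measurable
  ultimately have "measure (config_space n) {\<omega> \<in> space (config_space n). \<forall>i<n. \<forall>j<n. i \<noteq> j \<longrightarrow>
        ?lo \<le> real (num_through \<Delta> n \<omega> i j) \<and> real (num_through \<Delta> n \<omega> i j) \<le> ?hi}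
      = measure (PiM {..<n} (\<lambda>_. unif_S2)) ?T"
    unfolding event unfolding config_space_def by (rule measure_pair_measure_Times_space)
  moreover have "1 - real n ^ 2 * (exp (2 - sqrt (real n)) + exp (- sqrt (real n) / 512))
      \<le> measure (PiM {..<n} (\<lambda>_. unif_S2)) ?T"
    using mult_left_mono[OF chernoff_exponents_le[OF A assms(3,4)], of "real n ^ 2"]
      prob_crossing_counts_within[OF s, of n ?hi ?lo]
    unfolding \<theta>_def by simp
  ultimately show ?thesis by simp
qed

theorem lemma1:
  fixes \<Delta> :: real
  assumes "\<Delta> > 0"
  shows "\<exists>c C. 0 < c \<and> c \<le> C \<and>
    (\<lambda>n. measure (config_space n)
       {\<omega> \<in> space (config_space n). \<forall>i<n. \<forall>j<n. i \<noteq> j \<longrightarrow>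
          c * sqrt (real n) \<le> real (num_through \<Delta> n \<omega> i j) \<and>
          real (num_through \<Delta> n \<omega> i j) \<le> C * sqrt (real n)}) \<longlonglongrightarrow> 1"
proof (intro exI conjI)
  define A where "A = 2 * pi * (2 + \<Delta>)"
  let ?typical = "\<lambda>n. measure (config_space n) {\<omega> \<in> space (config_space n). \<forall>i<n. \<forall>j<n. i \<noteq> j \<longrightarrow>
      A / 4096 * sqrt (real n) \<le> real (num_through \<Delta> n \<omega> i j) \<and>
      real (num_through \<Delta> n \<omega> i j) \<le> (6 * A + 1) * sqrt (real n)}"
  let ?bound = "\<lambda>n. 1 - real n ^ 2 * (exp (2 - sqrt (real n)) + exp (- sqrt (real n) / 512))"
  show "0 < A / 4096" "A / 4096 \<le> 6 * A + 1"
    using assms pi_gt_zero by (auto simp: A_def)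
  have "filterlim (\<lambda>n. sqrt (real n)) at_top sequentially" by real_asymp
  then have "eventually (\<lambda>n. A \<le> sqrt (real n)) sequentially"
    unfolding filterlim_at_top by blast
  then have "eventually (\<lambda>n. 4 \<le> n \<and> A \<le> sqrt (real n)) sequentially"
    by (intro eventually_conj eventually_ge_at_top)
  then have lower: "eventually (\<lambda>n. ?bound n \<le> ?typical n) sequentially"
    by eventually_elim (use prob_typical_config_ge[OF assms, folded A_def] in blast)
  have upper: "eventually (\<lambda>n. ?typical n \<le> 1) sequentially"
    by (intro always_eventually allI prob_space.prob_le_1 prob_space_config_space)
  have "?bound \<longlonglongrightarrow> 1" by real_asymp
  from tendsto_sandwich[OF lower upper this tendsto_const]
  show "?typical \<longlonglongrightarrow> 1" .
qed

end
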